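(* Let $b\geq2$, $n\geq2$, $\alpha_1,\dots,\alpha_n>0$, $y_1=0$ and let $y_2,\dots,y_n\in[0,1)$ be $b$-adic rational numbers. Then the multivariate multifractal Legendre spectrum, based on second-order oscillations, of $L_{\alpha_1}^{b,-y_1},\dots,L_{\alpha_n}^{b,-y_n}$ is $$\mathcal{L}(H_1,\dots,H_n)=\begin{cases}\frac{H_1}{\alpha_1}, & \text{if } (H_1,\dots,H_n)\in[0,\alpha_1]\times\cdots\times[0,\alpha_n] \text{ and } H_i=\frac{\alpha_i}{\alpha_1}H_1 \text{ for all } 2\le i\le n,\\ -\infty, & \text{otherwise.}\end{cases}$$
   Context: Fix an integer $b\geq 2$. The saw-tooth function is $\{x\}=x-\lfloor x\rfloor-\frac12$ if $x\notin\mathbb{Z}$ and $\{x\}=0$ if $x\in\mathbb{Z}$. For $\alpha>0$ the Lévy function is $L_\alpha^b(x)=\sum_{i\geq1}\{b^ix\}\,b^{-\alpha i}$, and for $y\in\mathbb{R}$ the shifted Lévy function is $L_\alpha^{b,y}(x)=L_\alpha^b(x-y)$ (so $L_\alpha^{b,-y}(x)=L_\alpha^b(x+y)$). $b$-adic grid: for $j\in\mathbb{N}$, $k\in\mathbb{Z}$, $\lambda=\lambda(j,k)=[kb^{-j},(k+1)b^{-j})$ and $3\lambda=[(k-1)b^{-j},(k+2)b^{-j})$. $\Lambda_j$ denotes the set of the $b^j$ such intervals of width $b^{-j}$ contained in $[0,1)$. Second-order difference: $\Delta_f^2(x,h)=f(x+2h)-2f(x+h)+f(x)$. The oscillation of $f$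 on $3\lambda$ is $d_\lambda(f)=\sup\{|\Delta_f^2(x,h)|:\ x,\,x+2h\in3\lambda\}$. For functions $f_1,\dots,f_d$ with $d_\lambda^{(i)}=d_\lambda(f_i)$: structure function $S(r,j)=b^{-j}\sum_{\lambda\in\Lambda_j}\prod_{i=1}^d (d_\lambda^{(i)})^{r_i}$ for $r\in\mathbb{R}^d$; scaling function $\zeta(r)=\liminf_{j\to\infty}\frac{\log S(r,j)}{\log b^{-j}}$; multivariate multifractal Legendre spectrum $\mathcal{L}_{f_1,\dots,f_d}(H)=\inf_{r\in\mathbb{R}^d}\big(1-\zeta(r)+H\cdot r\big)$ for $H\in\mathbb{R}^d$ (value $-\infty$ allowed). *)

theory Defs
  imports "HOL-Analysis.Analysis"
begin

definition sawtooth :: "real \<Rightarrow> real" where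
  "sawtooth x = (if x \<in> \<int> then 0 else x - of_int \<lfloor>x\<rfloor> - 1/2)"

definition levy :: "nat \<Rightarrow> real \<Rightarrow> real \<Rightarrow> real" where
  "levy b \<alpha> x = (\<Sum>i. sawtooth (real b ^ (Suc i) * x) * real b powr (- \<alpha> * real (Suc i)))"

definition shifted_levy :: "nat \<Rightarrow> real \<Rightarrow> real \<Rightarrow> real \<Rightarrow> real" where
  "shifted_levy b \<alpha> y x = levy b \<alpha> (x - y)"

definition delta2 :: "(real \<Rightarrow> real) \<Rightarrow> real \<Rightarrow> real \<Rightarrow> real" where
  "delta2 f x h = f (x + 2 * h) - 2 * f (x + h) + f x"

text \<open>3 lambda for lambda = lambda(j,k) = [k b^-j, (k+1) b^-j).\<close>
definition three_lambda :: "nat \<Rightarrow> nat \<Rightarrow> int \<Rightarrow> real set" where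
  "three_lambda b j k = {(of_int k - 1) / real b ^ j ..< (of_int k + 2) / real b ^ j}"

definition osc :: "nat \<Rightarrow> (real \<Rightarrow> real) \<Rightarrow> nat \<Rightarrow> int \<Rightarrow> real" where
  "osc b f j k = Sup {\<bar>delta2 f x h\<bar> | x h. x \<in> three_lambda b j k \<and> x + 2 * h \<in> three_lambda b j k}"

definition structure_fun ::
  "nat \<Rightarrow> nat \<Rightarrow> (nat \<Rightarrow> real \<Rightarrow> real) \<Rightarrow> (nat \<Rightarrow> real) \<Rightarrow> nat \<Rightarrow> real" where
  "structure_fun b n fs r j =
     (1 / real b ^ j) * (\<Sum>k\<in>{0..<b ^ j}. \<Prod>i\<in>{1..n}. osc b (fs i) j (int k) powr r i)"

definition scaling_fun ::
  "nat \<Rightarrow> nat \<Rightarrow> (nat \<Rightarrow> real \<Rightarrow> real) \<Rightarrow> (nat \<Rightarrow> real) \<Rightarrow> ereal" where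
  "scaling_fun b n fs r =
     liminf (\<lambda>j. ereal (ln (structure_fun b n fs r j) / ln (1 / real b ^ j)))"

definition legendre_spectrum ::
  "nat \<Rightarrow> nat \<Rightarrow> (nat \<Rightarrow> real \<Rightarrow> real) \<Rightarrow> (nat \<Rightarrow> real) \<Rightarrow> ereal" where
  "legendre_spectrum b n fs H =
     (INF r \<in> UNIV. 1 - scaling_fun b n fs r + ereal (\<Sum>i\<in>{1..n}. H i * r i))"

definition b_adic_rational :: "nat \<Rightarrow> real \<Rightarrow> bool" where
  "b_adic_rational b y \<longleftrightarrow> (\<exists>(k::int) (m::nat). y = of_int k / real b ^ m)"

end

theory Submission
  imports Defs "HOL-Real_Asymp.Real_Asymp"
begin

(*
  The i-th saw-tooth layer of the shifted Levy function is affine on a window 3 lambda unless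
  3 lambda meets a point of b^(-i) Z - y, and at such a point a tiny second difference of that
  layer equals 1/2 while the finer layers are negligible. Hence, for a b-adic shift y, the
  oscillation on 3 lambda(j,k) is comparable to b^(-alpha m), where m is the first generation of
  b-adic points met by 3 lambda. The window k = 0 has m = 1, at most 9 b^e windows have m = e,
  and at least b^(j-2) windows have m >= j - 1. So the structure function behaves like
  b^(-j min(1, alpha.r)) up to factors polynomial in j, the scaling function is
  zeta(r) = min(1, alpha.r), and its Legendre transform is finite only on the segment
  H = h alpha, 0 <= h <= 1, where it equals h.
*)

section \<open>Second differences of the saw-tooth function\<close>

lemma sawtooth_abs_le: "\<bar>sawtooth u\<bar> \<le> 1/2"
proof (cases "u \<in> \<int>")
  case False
  then have "sawtooth u = u - of_int \<lfloor>u\<rfloor> - 1/2" by (simp add: sawtooth_def)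
  then show ?thesis
    using of_int_floor_le[of u] real_of_int_floor_add_one_gt[of u] unfolding abs_le_iff by linarith
qed (simp add: sawtooth_def)

lemma abs_delta2_sawtooth_le: "\<bar>delta2 sawtooth u h\<bar> \<le> 2"
  using sawtooth_abs_le[of u] sawtooth_abs_le[of "u + h"] sawtooth_abs_le[of "u + 2*h"]
  unfolding delta2_def by linarith

lemma delta2_comp_affine: "delta2 (\<lambda>z. f (c * (z + y))) x h = delta2 f (c * (x + y)) (c * h)"
  unfolding delta2_def by (simp add: algebra_simps)

lemma delta2_reverse: "delta2 f x h = delta2 f (x + 2*h) (-h)"
  unfolding delta2_def by (simp add: algebra_simps)

lemma floor_eq_if_no_Ints_between:
  fixes u v :: real
  assumes "u \<le> v" and no_int: "\<And>w. u \<le> w \<Longrightarrow> w \<le> v \<Longrightarrow> w \<notin> \<int>"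
  shows "\<lfloor>u\<rfloor> = \<lfloor>v\<rfloor>"
proof (rule ccontr)
  assume "\<lfloor>u\<rfloor> \<noteq> \<lfloor>v\<rfloor>"
  with floor_mono[OF \<open>u \<le> v\<close>] have "u < of_int \<lfloor>v\<rfloor>"
    by (metis floor_less_iff order_less_le)
  then show False
    using no_int[of "of_int \<lfloor>v\<rfloor>"] of_int_floor_le[of v] by auto
qed

lemma delta2_sawtooth_eq_0:
  fixes u \<delta> :: real
  assumes no_int: "\<And>w. min u (u + 2*\<delta>) \<le> w \<Longrightarrow> w \<le> max u (u + 2*\<delta>) \<Longrightarrow> w \<notin> \<int>"
  shows "delta2 sawtooth u \<delta> = 0"
proof -
  have nonneg_case: "delta2 sawtooth v d = 0"
    if "0 \<le> d" and "\<And>w. v \<le> w \<Longrightarrow> w \<le> v + 2*d \<Longrightarrow> w \<notin> \<int>" for v d :: real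
  proof -
    have "\<lfloor>v\<rfloor> = \<lfloor>v + d\<rfloor>" "\<lfloor>v + d\<rfloor> = \<lfloor>v + 2*d\<rfloor>"
      using that by (auto intro!: floor_eq_if_no_Ints_between)
    moreover have "v \<notin> \<int>" "v + d \<notin> \<int>" "v + 2*d \<notin> \<int>"
      using that by auto
    ultimately show ?thesis
      by (simp add: delta2_def sawtooth_def algebra_simps)
  qed
  show ?thesis
  proof (cases "0 \<le> \<delta>")
    case True
    then show ?thesis using no_int by (intro nonneg_case) auto
  next
    case False
    then have "delta2 sawtooth (u + 2*\<delta>) (-\<delta>) = 0"
      using no_int by (intro nonneg_case) auto
    then show ?thesis by (simp add: delta2_reverse[of _ u])
  qed
qed

lemma delta2_sawtooth_Ints:
  assumes "u \<in> \<int>" "0 < \<delta>" "2*\<delta> < 1"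
  shows "delta2 sawtooth u \<delta> = 1/2"
proof -
  obtain z where z: "u = of_int z" using assms(1) Ints_cases by blast
  have "\<lfloor>u + \<delta>\<rfloor> = z" "\<lfloor>u + 2*\<delta>\<rfloor> = z" "u + \<delta> \<notin> \<int>" "u + 2*\<delta> \<notin> \<int>"
    using z assms by (auto simp: floor_eq_iff elim!: Ints_cases)
  then show ?thesis
    using assms(1) by (simp add: delta2_def sawtooth_def z)
qed

text \<open>The integers are points of the grid \<open>\<int>/d\<close>, so \<open>[Q/d, Q/d + 2\<delta>]\<close> contains no integer
  except possibly \<open>Q/d\<close>; the second difference is then \<open>0\<close> or \<open>1/2\<close>.\<close>
lemma delta2_sawtooth_grid_nonneg:
  fixes Q d :: int and \<delta> :: real
  assumes d: "d \<ge> 1" and \<delta>: "0 < \<delta>" "2 * \<delta> * d < 1"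
  shows "delta2 sawtooth (Q / d) \<delta> \<ge> 0"
proof (cases "(Q / d :: real) \<in> \<int>")
  case True
  have "2 * \<delta> \<le> 2 * \<delta> * d" using d \<delta> by simp
  then have "2 * \<delta> < 1" using \<delta>(2) by linarith
  then show ?thesis using delta2_sawtooth_Ints[OF True \<delta>(1)] by simp
next
  case False
  have d_pos: "real_of_int d > 0" using d by simp
  have "w \<notin> \<int>" if w: "Q / d \<le> w" "w \<le> Q / d + 2 * \<delta>" for w :: real
  proof
    assume "w \<in> \<int>"
    then obtain m where m: "w = of_int m" by (auto elim: Ints_cases)
    with False w(1) have "Q / d < of_int m" by (auto simp: order.order_iff_strict)
    then have "Q < m * d" using d_pos by (simp add: divide_less_eq flip: of_int_mult)
    then have "real_of_int (Q + 1) \<le> of_int m * of_int d" by (simp flip: of_int_mult)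
    then have "Q / d + 1 / d \<le> w" using d_pos m by (simp add: pos_divide_le_eq add_divide_distrib[symmetric])
    moreover have "2 * \<delta> < 1 / d" using \<delta> d_pos by (simp add: field_simps)
    ultimately show False using w(2) by linarith
  qed
  then show ?thesis
    using \<delta> by (subst delta2_sawtooth_eq_0) auto
qed

section \<open>Second differences of shifted Levy functions\<close>

lemma powr_neg_bounds:
  assumes "b \<ge> 2" "\<alpha> > 0"
  shows "0 < real b powr - \<alpha>" "real b powr - \<alpha> < 1"
  using assms by (auto intro!: powr_less_one)

lemma levy_eq_series:
  assumes "b \<ge> 2"
  shows "levy b \<alpha> z = (\<Sum>i. sawtooth (real b ^ Suc i * z) * (real b powr - \<alpha>) ^ Suc i)"
proof -
  have "real b powr (- \<alpha> * real (Suc i)) = (real b powr - \<alpha>) ^ Suc i" for i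
  proof -
    have "(real b powr - \<alpha>) ^ Suc i = (real b powr - \<alpha>) powr real (Suc i)"
      using assms by (intro powr_realpow[symmetric]) simp
    then show ?thesis by (simp add: powr_powr)
  qed
  then show ?thesis unfolding levy_def by simp
qed

lemma summable_sawtooth_geometric:
  fixes w :: real
  assumes "0 < w" "w < 1"
  shows "summable (\<lambda>i. sawtooth (u i) * w ^ Suc i)"
proof (rule summable_comparison_test')
  show "summable (\<lambda>i. w ^ Suc i)" using assms by simp
  show "norm (sawtooth (u i) * w ^ Suc i) \<le> w ^ Suc i" for i
    using sawtooth_abs_le[of "u i"] assms
    by (simp add: abs_mult mult_left_le_one_le)
qed

lemma delta2_suminf:
  assumes "\<And>z. summable (\<lambda>i. g i z :: real)"
  shows "(\<lambda>i. delta2 (g i) x h) sums delta2 (\<lambda>z. \<Sum>i. g i z) x h"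
  unfolding delta2_def using assms by (intro sums_add sums_diff sums_mult summable_sums)

lemma delta2_shifted_levy_sums:
  assumes "b \<ge> 2" "\<alpha> > 0"
  shows "(\<lambda>i. delta2 sawtooth (real b ^ Suc i * (x + y)) (real b ^ Suc i * h) * (real b powr - \<alpha>) ^ Suc i)
    sums delta2 (shifted_levy b \<alpha> (- y)) x h"
proof -
  let ?w = "real b powr - \<alpha>"
  have "shifted_levy b \<alpha> (- y) = (\<lambda>z. \<Sum>i. sawtooth (real b ^ Suc i * (z + y)) * ?w ^ Suc i)"
    using levy_eq_series[OF assms(1)] by (simp add: shifted_levy_def fun_eq_iff)
  moreover have "delta2 (\<lambda>z. sawtooth (real b ^ Suc i * (z + y)) * ?w ^ Suc i) x h
      = delta2 sawtooth (real b ^ Suc i * (x + y)) (real b ^ Suc i * h) * ?w ^ Suc i" for i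
    by (simp add: delta2_def delta2_comp_affine[symmetric] algebra_simps)
  ultimately show ?thesis
    using delta2_suminf[of "\<lambda>i z. sawtooth (real b ^ Suc i * (z + y)) * ?w ^ Suc i" x h]
      summable_sawtooth_geometric powr_neg_bounds[OF assms] by simp
qed

lemma geometric_tail_sums:
  fixes w :: real
  assumes "0 < w" "w < 1" "e \<ge> 1"
  shows "(\<lambda>i. if Suc i < e then 0 else w ^ Suc i) sums (w ^ e / (1 - w))"
proof -
  let ?f = "\<lambda>i. if Suc i < e then 0 else w ^ Suc i"
  have "(\<lambda>i. w ^ e * w ^ i) sums (w ^ e * (1 / (1 - w)))"
    using assms geometric_sums[of w] by (intro sums_mult) auto
  moreover have "(\<lambda>i. ?f (i + (e - 1))) = (\<lambda>i. w ^ e * w ^ i)"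
    using assms(3) by (auto simp: power_add[symmetric] Suc_diff_le add.commute)
  ultimately have "(\<lambda>i. ?f (i + (e - 1))) sums (w ^ e / (1 - w))" by simp
  then have "?f sums (w ^ e / (1 - w) + (\<Sum>i<e - 1. ?f i))"
    by (rule sums_iff_shift[THEN iffD1])
  moreover have "(\<Sum>i<e - 1. ?f i) = 0" by (intro sum.neutral) auto
  ultimately show ?thesis by simp
qed

lemma sums_abs_le_geometric_tail:
  fixes w :: real
  assumes "0 < w" "w < 1" "e \<ge> 1"
    and "\<And>i. Suc i < e \<Longrightarrow> a i = 0" "\<And>i. \<bar>a i\<bar> \<le> M"
    and "(\<lambda>i. a i * w ^ Suc i) sums S"
  shows "\<bar>S\<bar> \<le> M * w ^ e / (1 - w)"
proof -
  have tail: "(\<lambda>i. c * (if Suc i < e then 0 else w ^ Suc i)) sums (c * (w ^ e / (1 - w)))" for c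
    by (intro sums_mult geometric_tail_sums assms)
  have bound: "\<bar>a i * w ^ Suc i\<bar> \<le> M * (if Suc i < e then 0 else w ^ Suc i)" for i
    using assms(4)[of i] assms(5)[of i] assms(1) by (auto simp: abs_mult intro: mult_right_mono)
  have "- M * (if Suc i < e then 0 else w ^ Suc i) \<le> a i * w ^ Suc i"
    "a i * w ^ Suc i \<le> M * (if Suc i < e then 0 else w ^ Suc i)" for i
    using bound[of i] by (simp_all only: abs_le_iff mult_minus_left) linarith+
  from sums_le[OF this(1) tail assms(6)] sums_le[OF this(2) assms(6) tail] show ?thesis
    by simp
qed

lemma sums_ge_geometric_single:
  fixes w :: real
  assumes w: "0 < w" "w < 1" and e: "1 \<le> e" "e \<le> N"
    and a: "c \<le> a (e - 1)" "\<And>i. Suc i \<le> N \<Longrightarrow> 0 \<le> a i" "\<And>i. \<bar>a i\<bar> \<le> M"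
    and S: "(\<lambda>i. a i * w ^ Suc i) sums S"
  shows "c * w ^ e - M * (w ^ Suc N / (1 - w)) \<le> S"
proof -
  let ?g = "\<lambda>i. (if i = e - 1 then c * w ^ e else 0) - M * (if Suc i < Suc N then 0 else w ^ Suc i)"
  have g_sums: "?g sums (c * w ^ e - M * (w ^ Suc N / (1 - w)))"
    using w by (intro sums_diff sums_mult sums_single geometric_tail_sums) auto
  have g_le: "?g i \<le> a i * w ^ Suc i" for i
  proof -
    have wi: "0 \<le> w ^ Suc i" using w by simp
    consider "i = e - 1" | "i \<noteq> e - 1" "Suc i \<le> N" | "\<not> Suc i \<le> N" by blast
    then show ?thesis
    proof cases
      case 1
      then have "Suc i = e" "Suc i < Suc N" using e by auto
      moreover have "c * w ^ Suc i \<le> a i * w ^ Suc i" using a(1) 1 wi by (intro mult_right_mono) auto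
      ultimately show ?thesis using 1 by simp
    next
      case 2
      then have "0 \<le> a i * w ^ Suc i" using a(2) wi by simp
      then show ?thesis using 2 by simp
    next
      case 3
      have "- M \<le> a i" using a(3)[of i] by linarith
      then have "- M * w ^ Suc i \<le> a i * w ^ Suc i" using wi by (rule mult_right_mono)
      moreover have "i \<noteq> e - 1" using 3 e by linarith
      ultimately show ?thesis using 3 by simp
    qed
  qed
  show ?thesis by (rule sums_le[OF g_le g_sums S])
qed

lemma abs_delta2_shifted_levy_le:
  assumes b: "b \<ge> 2" and \<alpha>: "\<alpha> > 0" and x: "x \<in> {a..<a'}" "x + 2*h \<in> {a..<a'}" and e: "1 \<le> e"
    and no_int: "\<And>p z. 1 \<le> p \<Longrightarrow> p < e \<Longrightarrow> z \<in> {a..<a'} \<Longrightarrow> real b ^ p * (z + y) \<notin> \<int>"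
  shows "\<bar>delta2 (shifted_levy b \<alpha> (- y)) x h\<bar> \<le> 2 * (real b powr - \<alpha>) ^ e / (1 - real b powr - \<alpha>)"
proof -
  have lower_layers: "delta2 sawtooth (real b ^ Suc i * (x + y)) (real b ^ Suc i * h) = 0" if "Suc i < e" for i
  proof (rule delta2_sawtooth_eq_0)
    fix v
    let ?c = "real b ^ Suc i"
    assume v: "min (?c * (x + y)) (?c * (x + y) + 2 * (?c * h)) \<le> v"
      "v \<le> max (?c * (x + y)) (?c * (x + y) + 2 * (?c * h))"
    have c: "?c > 0" using b by simp
    have "?c * (x + y) + 2 * (?c * h) = ?c * (x + 2*h + y)" by (simp add: algebra_simps)
    moreover have "?c * (a + y) \<le> ?c * (x + y)" "?c * (a + y) \<le> ?c * (x + 2*h + y)"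
      using x c by (auto intro!: mult_left_mono)
    moreover have "?c * (x + y) < ?c * (a' + y)" "?c * (x + 2*h + y) < ?c * (a' + y)"
      using x c by (auto intro!: mult_strict_left_mono)
    ultimately have "?c * (a + y) \<le> v" "v < ?c * (a' + y)" using v by linarith+
    then have "v / ?c - y \<in> {a..<a'}" using c by (simp add: field_simps)
    then have "?c * (v / ?c - y + y) \<notin> \<int>" using that by (intro no_int) auto
    moreover have "?c * (v / ?c - y + y) = v" using b by simp
    ultimately show "v \<notin> \<int>" by simp
  qed
  show ?thesis
  proof (rule sums_abs_le_geometric_tail[OF _ _ e _ _ delta2_shifted_levy_sums[OF b \<alpha>]])
    show "0 < real b powr - \<alpha>" "real b powr - \<alpha> < 1" by (rule powr_neg_bounds[OF b \<alpha>])+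
  qed (use lower_layers abs_delta2_sawtooth_le in auto)
qed

text \<open>If \<open>x\<^sub>0 + y\<close> has denominator \<open>b\<^sup>e\<close>, then for a step \<open>h\<close> much smaller than
  \<open>b\<^sup>-\<^sup>N\<close> the layers below \<open>e\<close> contribute nonnegatively, layer \<open>e\<close> contributes
  \<open>w\<^sup>e/2\<close>, and the layers above \<open>N\<close> cost at most a geometric tail.\<close>
lemma delta2_shifted_levy_ge_at_scale:
  fixes Q :: int
  assumes b: "b \<ge> 2" and \<alpha>: "\<alpha> > 0" and e: "1 \<le> e" "e \<le> N"
    and Q: "x0 + y = of_int Q / real b ^ e"
  defines "w \<equiv> real b powr - \<alpha>" and "h \<equiv> 1 / (4 * real b ^ (2 * N))"
  shows "1/2 * w ^ e - 2 * (w ^ Suc N / (1 - w)) \<le> delta2 (shifted_levy b \<alpha> (- y)) x0 h"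
proof -
  have w: "0 < w" "w < 1" using powr_neg_bounds[OF b \<alpha>] by (simp_all add: w_def)
  have h: "h > 0" using b by (simp add: h_def)
  have small_step: "2 * (real b ^ p * h) * real b ^ e \<le> 1/2" if "p \<le> N" for p
  proof -
    have "real b ^ (p + e) \<le> real b ^ (2 * N)" using b that e(2) by (intro power_increasing) auto
    then show ?thesis using b by (simp add: h_def power_add field_simps)
  qed
  define d where "d i = delta2 sawtooth (real b ^ Suc i * (x0 + y)) (real b ^ Suc i * h)" for i
  have low_layers: "0 \<le> d i" if "Suc i \<le> N" for i
  proof -
    have "real b ^ Suc i * (x0 + y) = of_int (Q * int b ^ Suc i) / of_int (int b ^ e)"
      using Q by simp
    moreover have "0 \<le> delta2 sawtooth (of_int (Q * int b ^ Suc i) / of_int (int b ^ e)) (real b ^ Suc i * h)"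
      using b h small_step[OF that] by (intro delta2_sawtooth_grid_nonneg) auto
    ultimately show ?thesis unfolding d_def by simp
  qed
  have "real b ^ e * (x0 + y) = of_int Q" using Q b by simp
  moreover have "2 * (real b ^ e * h) < 1"
    using small_step[of 0] by (simp add: mult.commute)
  ultimately have layer_e: "d (e - 1) = 1/2"
    unfolding d_def using e b h by (simp add: delta2_sawtooth_Ints)
  have series: "(\<lambda>i. d i * w ^ Suc i) sums delta2 (shifted_levy b \<alpha> (- y)) x0 h"
    unfolding d_def w_def by (rule delta2_shifted_levy_sums[OF b \<alpha>])
  have "\<bar>d i\<bar> \<le> 2" for i unfolding d_def by (rule abs_delta2_sawtooth_le)
  from sums_ge_geometric_single[OF w e eq_refl[OF layer_e[symmetric]] low_layers this series]
  show ?thesis .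
qed

lemma delta2_shifted_levy_ge:
  fixes Q :: int
  assumes b: "b \<ge> 2" and \<alpha>: "\<alpha> > 0" and x0: "x0 \<in> {a..<a'}" and e: "1 \<le> e"
    and Q: "x0 + y = of_int Q / real b ^ e"
  shows "\<exists>x h. x \<in> {a..<a'} \<and> x + 2*h \<in> {a..<a'} \<and>
    (real b powr - \<alpha>) ^ e / 4 \<le> delta2 (shifted_levy b \<alpha> (- y)) x h"
proof -
  define w where "w = real b powr - \<alpha>"
  have w: "0 < w" "w < 1" using powr_neg_bounds[OF b \<alpha>] by (simp_all add: w_def)
  have "\<forall>\<^sub>F N in sequentially. w ^ N < w ^ e * (1 - w) / 8"
    using w by (intro order_tendstoD(2)[OF LIMSEQ_power_zero]) auto
  moreover have "\<forall>\<^sub>F N in sequentially. (1 / real b) ^ N < a' - x0"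
    using b x0 by (intro order_tendstoD(2)[OF LIMSEQ_power_zero]) auto
  ultimately have "\<forall>\<^sub>F N in sequentially. e \<le> N \<and> w ^ N < w ^ e * (1 - w) / 8 \<and> (1 / real b) ^ N < a' - x0"
    by (intro eventually_conj eventually_ge_at_top)
  then obtain N where N: "e \<le> N" "w ^ N < w ^ e * (1 - w) / 8" "(1 / real b) ^ N < a' - x0"
    unfolding eventually_sequentially by blast
  define h where "h = 1 / (4 * real b ^ (2 * N))"
  have bN: "1 \<le> real b ^ N" using b by (simp add: one_le_power)
  have "2 * h \<le> (1 / real b) ^ N"
    using b by (simp add: h_def power_divide field_simps power_mult power2_eq_square) (use bN in linarith)
  moreover have "h > 0" using b by (simp add: h_def)
  ultimately have x2: "x0 + 2*h \<in> {a..<a'}" using x0 N(3) by auto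
  have "w ^ Suc N < w ^ e * (1 - w) / 8"
    using N(2) power_decreasing[of N "Suc N" w] w by linarith
  then have "w ^ Suc N / (1 - w) \<le> w ^ e / 8" using w by (simp add: field_simps)
  with delta2_shifted_levy_ge_at_scale[OF b \<alpha> e N(1) Q, folded w_def h_def]
  have "w ^ e / 4 \<le> delta2 (shifted_levy b \<alpha> (- y)) x0 h" by linarith
  then show ?thesis
    unfolding w_def[symmetric] using x0 x2 by blast
qed

section \<open>Oscillations and the b-adic depth of a window\<close>

lemma three_lambda_nat: "three_lambda b j (int k) = {(real k - 1) / real b ^ j..<(real k + 2) / real b ^ j}"
  by (simp add: three_lambda_def)

lemma of_int_divide_power_rescale:
  assumes "b > 0" "e \<le> E"
  shows "of_int q / real b ^ e = of_int (q * int b ^ (E - e)) / real b ^ E"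
proof -
  have "real b ^ E = real b ^ e * real b ^ (E - e)"
    using assms(2) by (simp add: power_add[symmetric])
  then show ?thesis using assms(1) by simp
qed

lemma of_int_divide_power_add:
  assumes "b > 0"
  shows "of_int p / real b ^ e + of_int q / real b ^ f
    = of_int (p * int b ^ (max e f - e) + q * int b ^ (max e f - f)) / real b ^ max e f"
  using of_int_divide_power_rescale[OF assms, of e "max e f" p] of_int_divide_power_rescale[OF assms, of f "max e f" q]
  by (simp add: add_divide_distrib)

lemma osc_le:
  assumes "\<And>x h. x \<in> three_lambda b j k \<Longrightarrow> x + 2*h \<in> three_lambda b j k \<Longrightarrow> \<bar>delta2 f x h\<bar> \<le> B"
    and "three_lambda b j k \<noteq> {}"
  shows "osc b f j k \<le> B"
  unfolding osc_def
proof (rule cSup_least)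
  obtain x where "x \<in> three_lambda b j k" using assms(2) by blast
  then have "\<bar>delta2 f x 0\<bar> \<in> {\<bar>delta2 f x h\<bar> | x h. x \<in> three_lambda b j k \<and> x + 2 * h \<in> three_lambda b j k}"
    by force
  then show "{\<bar>delta2 f x h\<bar> | x h. x \<in> three_lambda b j k \<and> x + 2 * h \<in> three_lambda b j k} \<noteq> {}"
    by blast
qed (use assms(1) in blast)

lemma osc_ge:
  assumes "\<And>x h. x \<in> three_lambda b j k \<Longrightarrow> x + 2*h \<in> three_lambda b j k \<Longrightarrow> \<bar>delta2 f x h\<bar> \<le> B"
    and "x \<in> three_lambda b j k" "x + 2*h \<in> three_lambda b j k" "v \<le> \<bar>delta2 f x h\<bar>"
  shows "v \<le> osc b f j k"
  unfolding osc_def using assms by (intro cSup_upper2[where x = "\<bar>delta2 f x h\<bar>"] bdd_aboveI) auto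

definition meets_badic_grid :: "nat \<Rightarrow> nat \<Rightarrow> nat \<Rightarrow> nat \<Rightarrow> bool" where
  "meets_badic_grid b j k e \<longleftrightarrow> (\<exists>q::int. of_int q / real b ^ e \<in> three_lambda b j (int k))"

definition badic_depth :: "nat \<Rightarrow> nat \<Rightarrow> nat \<Rightarrow> nat" where
  "badic_depth b j k = (LEAST e. 1 \<le> e \<and> meets_badic_grid b j k e)"

lemma meets_badic_grid_self: "b \<ge> 2 \<Longrightarrow> meets_badic_grid b j k j"
  unfolding meets_badic_grid_def three_lambda_nat
  by (intro exI[of _ "int k"]) (auto simp: divide_right_mono divide_strict_right_mono)

lemma
  assumes "b \<ge> 2" "j \<ge> 1"
  shows badic_depth_ge_1: "1 \<le> badic_depth b j k"
    and badic_depth_le: "badic_depth b j k \<le> j"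
    and meets_badic_grid_depth: "meets_badic_grid b j k (badic_depth b j k)"
    and not_meets_badic_grid_below_depth:
      "\<And>e. 1 \<le> e \<Longrightarrow> e < badic_depth b j k \<Longrightarrow> \<not> meets_badic_grid b j k e"
proof -
  have j: "1 \<le> j \<and> meets_badic_grid b j k j" using assms meets_badic_grid_self by simp
  show "1 \<le> badic_depth b j k" "meets_badic_grid b j k (badic_depth b j k)"
    unfolding badic_depth_def using LeastI[of "\<lambda>e. 1 \<le> e \<and> meets_badic_grid b j k e", OF j] by auto
  show "badic_depth b j k \<le> j"
    unfolding badic_depth_def by (rule Least_le[of "\<lambda>e. 1 \<le> e \<and> meets_badic_grid b j k e", OF j])
  show "\<And>e. 1 \<le> e \<Longrightarrow> e < badic_depth b j k \<Longrightarrow> \<not> meets_badic_grid b j k e"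
    unfolding badic_depth_def using not_less_Least by blast
qed

lemma badic_depth_0:
  assumes "b \<ge> 2" "j \<ge> 1"
  shows "badic_depth b j 0 = 1"
proof -
  have "meets_badic_grid b j 0 1"
    unfolding meets_badic_grid_def three_lambda_nat using assms by (intro exI[of _ 0]) auto
  then have "badic_depth b j 0 \<le> 1" unfolding badic_depth_def by (intro Least_le) simp
  then show ?thesis using badic_depth_ge_1[OF assms, of 0] by simp
qed

lemma not_Ints_below_badic_depth:
  fixes Y :: int
  assumes b: "b \<ge> 2" and j: "j \<ge> 1" and y: "y = of_int Y / real b ^ K"
    and K: "K < badic_depth b j k" and p: "1 \<le> p" "p < badic_depth b j k"
    and z: "z \<in> three_lambda b j (int k)"
  shows "real b ^ p * (z + y) \<notin> \<int>"
proof
  assume "real b ^ p * (z + y) \<in> \<int>"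
  then obtain n where "real b ^ p * (z + y) = of_int n" by (auto elim: Ints_cases)
  then have "z = of_int n / real b ^ p + of_int (- Y) / real b ^ K"
    using y b by (simp add: field_simps)
  also have "\<dots> = of_int (n * int b ^ (max p K - p) + - Y * int b ^ (max p K - K)) / real b ^ max p K"
    using b by (intro of_int_divide_power_add) simp
  finally have "meets_badic_grid b j k (max p K)"
    unfolding meets_badic_grid_def using z by blast
  moreover have "1 \<le> max p K" "max p K < badic_depth b j k" using p K by auto
  ultimately show False using not_meets_badic_grid_below_depth[OF b j] by blast
qed

lemma osc_shifted_levy_le_geometric:
  assumes b: "b \<ge> 2" and \<alpha>: "\<alpha> > 0" and e: "1 \<le> e"
    and no_int: "\<And>p z. 1 \<le> p \<Longrightarrow> p < e \<Longrightarrow> z \<in> three_lambda b j (int k) \<Longrightarrow> real b ^ p * (z + y) \<notin> \<int>"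
  shows "osc b (shifted_levy b \<alpha> (- y)) j (int k) \<le> 2 * (real b powr - \<alpha>) ^ e / (1 - real b powr - \<alpha>)"
proof (rule osc_le)
  show "three_lambda b j (int k) \<noteq> {}"
    using b by (simp add: three_lambda_nat divide_strict_right_mono)
  fix x h
  assume "x \<in> three_lambda b j (int k)" "x + 2 * h \<in> three_lambda b j (int k)"
  then show "\<bar>delta2 (shifted_levy b \<alpha> (- y)) x h\<bar> \<le> 2 * (real b powr - \<alpha>) ^ e / (1 - real b powr - \<alpha>)"
    unfolding three_lambda_nat using no_int[unfolded three_lambda_nat]
    by (intro abs_delta2_shifted_levy_le[OF b \<alpha> _ _ e]) auto
qed

lemma osc_shifted_levy_le:
  fixes Y :: int
  assumes b: "b \<ge> 2" and \<alpha>: "\<alpha> > 0" and j: "j \<ge> 1" and y: "y = of_int Y / real b ^ K"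
  defines "w \<equiv> real b powr - \<alpha>"
  shows "osc b (shifted_levy b \<alpha> (- y)) j (int k) \<le> 2 / ((1 - w) * w ^ K) * w ^ badic_depth b j k"
proof -
  have w: "0 < w" "w < 1" using powr_neg_bounds[OF b \<alpha>] by (simp_all add: w_def)
  let ?m = "badic_depth b j k"
  show ?thesis
  proof (cases "K < ?m")
    case True
    have "osc b (shifted_levy b \<alpha> (- y)) j (int k) \<le> 2 * w ^ ?m / (1 - w)"
      unfolding w_def using badic_depth_ge_1[OF b j] not_Ints_below_badic_depth[OF b j y True]
      by (intro osc_shifted_levy_le_geometric[OF b \<alpha>]) auto
    also have "\<dots> = 2 / ((1 - w) * w ^ K) * (w ^ K * w ^ ?m)"
      using w by (simp add: field_simps)
    also have "\<dots> \<le> 2 / ((1 - w) * w ^ K) * w ^ ?m"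
      using w by (intro mult_left_mono mult_left_le_one_le) (auto simp: power_le_one)
    finally show ?thesis .
  next
    case False
    have "osc b (shifted_levy b \<alpha> (- y)) j (int k) \<le> 2 * w ^ 1 / (1 - w)"
      unfolding w_def by (rule osc_shifted_levy_le_geometric[OF b \<alpha>]) auto
    also have "\<dots> = 2 / ((1 - w) * w ^ K) * (w * w ^ K)"
      using w by (simp add: field_simps)
    also have "\<dots> \<le> 2 / ((1 - w) * w ^ K) * w ^ ?m"
    proof -
      have "w * w ^ K \<le> w ^ K" using w by (intro mult_left_le_one_le) auto
      also have "\<dots> \<le> w ^ ?m" using w False by (intro power_decreasing) auto
      finally show ?thesis using w by (intro mult_left_mono) auto
    qed
    finally show ?thesis .
  qed
qed

lemma osc_shifted_levy_ge:
  fixes Y :: int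
  assumes b: "b \<ge> 2" and \<alpha>: "\<alpha> > 0" and j: "j \<ge> 1" and y: "y = of_int Y / real b ^ K"
  defines "w \<equiv> real b powr - \<alpha>"
  shows "w ^ K / 4 * w ^ badic_depth b j k \<le> osc b (shifted_levy b \<alpha> (- y)) j (int k)"
proof -
  have w: "0 < w" "w < 1" using powr_neg_bounds[OF b \<alpha>] by (simp_all add: w_def)
  let ?m = "badic_depth b j k"
  obtain q where q: "of_int q / real b ^ ?m \<in> three_lambda b j (int k)"
    using meets_badic_grid_depth[OF b j] unfolding meets_badic_grid_def by blast
  define E where "E = max ?m K"
  have "of_int q / real b ^ ?m + y = of_int (q * int b ^ (E - ?m) + Y * int b ^ (E - K)) / real b ^ E"
    unfolding y E_def using b by (intro of_int_divide_power_add) auto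
  moreover have "1 \<le> E" using badic_depth_ge_1[OF b j, of k] by (auto simp: E_def le_max_iff_disj)
  ultimately obtain x h where xh: "x \<in> three_lambda b j (int k)" "x + 2*h \<in> three_lambda b j (int k)"
    and "w ^ E / 4 \<le> delta2 (shifted_levy b \<alpha> (- y)) x h"
    using delta2_shifted_levy_ge[OF b \<alpha> q[unfolded three_lambda_nat]] unfolding w_def three_lambda_nat by blast
  moreover have "w ^ K / 4 * w ^ ?m \<le> w ^ E / 4"
    using w power_decreasing[of E "?m + K" w] by (simp add: E_def power_add mult.commute)
  ultimately show ?thesis
    using abs_delta2_shifted_levy_le[OF b \<alpha> _ _ order.refl, of _ _ _ _ y]
    by (intro osc_ge[OF _ xh]) (auto simp: three_lambda_nat)
qed

lemma osc_shifted_levy_comparable: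
  assumes b: "b \<ge> 2" and \<alpha>: "\<alpha> > 0" and y: "b_adic_rational b y"
  defines "w \<equiv> real b powr - \<alpha>"
  obtains c C where "0 < c" "c \<le> C"
    "\<And>j k. 1 \<le> j \<Longrightarrow> c * w ^ badic_depth b j k \<le> osc b (shifted_levy b \<alpha> (- y)) j (int k)"
    "\<And>j k. 1 \<le> j \<Longrightarrow> osc b (shifted_levy b \<alpha> (- y)) j (int k) \<le> C * w ^ badic_depth b j k"
proof -
  obtain Y K where Y: "y = of_int Y / real b ^ K" using y unfolding b_adic_rational_def by blast
  have w: "0 < w" "w < 1" using powr_neg_bounds[OF b \<alpha>] by (simp_all add: w_def)
  have "w ^ K / 4 \<le> 1 / 4" using w by (simp add: power_le_one)
  also have "\<dots> \<le> 2 / ((1 - w) * w ^ K)"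
    using w mult_le_one[of "1 - w" "w ^ K"] by (simp add: field_simps power_le_one)
  finally show thesis
    using that[of "w ^ K / 4" "2 / ((1 - w) * w ^ K)"] w
      osc_shifted_levy_ge[OF b \<alpha> _ Y] osc_shifted_levy_le[OF b \<alpha> _ Y]
    unfolding w_def by simp
qed

section \<open>Counting windows by depth\<close>

lemma meets_badic_grid_imp_int:
  assumes b: "b \<ge> 2" and e: "e \<le> j" and "meets_badic_grid b j k e"
  shows "\<exists>q::int. int k - 1 \<le> q * int b ^ (j - e) \<and> q * int b ^ (j - e) < int k + 2"
proof -
  obtain q where q: "(real k - 1) / real b ^ j \<le> of_int q / real b ^ e"
    "of_int q / real b ^ e < (real k + 2) / real b ^ j"
    using assms(3) unfolding meets_badic_grid_def three_lambda_nat by auto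
  have "of_int q / real b ^ e = of_int (q * int b ^ (j - e)) / real b ^ j"
    using b e by (intro of_int_divide_power_rescale) auto
  then have "real k - 1 \<le> of_int (q * int b ^ (j - e))" "of_int (q * int b ^ (j - e)) < real k + 2"
    using q b by (simp_all add: divide_le_cancel divide_less_cancel)
  then show ?thesis by (intro exI[of _ q]) linarith
qed

text \<open>For \<open>k \<equiv> 2 (mod b\<^sup>2)\<close> the integers \<open>k - 1, k, k + 1\<close> lie strictly between two consecutive
  multiples of \<open>b\<^sup>2\<close>, so \<open>3\<lambda>(j, k)\<close> meets no \<open>b\<close>-adic point of generation below \<open>j - 1\<close>.\<close>
lemma badic_depth_ge_if_mod:
  assumes b: "b \<ge> 2" and j: "j \<ge> 2" and k: "k mod b^2 = 2"
  shows "j - 1 \<le> badic_depth b j k"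
proof (rule ccontr)
  let ?e = "badic_depth b j k"
  assume "\<not> j - 1 \<le> ?e"
  then have lt: "?e \<le> j - 2" by simp
  have j1: "1 \<le> j" using j by simp
  obtain q where q: "int k - 1 \<le> q * int b ^ (j - ?e)" "q * int b ^ (j - ?e) < int k + 2"
    using meets_badic_grid_imp_int[OF b badic_depth_le[OF b j1] meets_badic_grid_depth[OF b j1]] by blast
  define u where "u = int (k div b^2)"
  have ku: "int k = int b^2 * u + 2" using k unfolding u_def
    by (metis div_mult_mod_eq mult.commute of_nat_add of_nat_mult of_nat_numeral of_nat_power)
  define Q where "Q = q * int b ^ (j - ?e - 2)"
  have "j - ?e = 2 + (j - ?e - 2)" using lt j by simp
  then have "int b ^ (j - ?e) = int b^2 * int b ^ (j - ?e - 2)" by (metis power_add)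
  then have qd: "q * int b ^ (j - ?e) = int b^2 * Q" by (simp add: Q_def)
  have b4: "int b ^ 2 \<ge> 4" using power_mono[of 2 "int b" 2] b by simp
  have "int b^2 * u < int b^2 * Q" "int b^2 * Q < int b^2 * (u + 1)"
    using q ku qd b4 by (simp_all add: algebra_simps)
  then have "u < Q" "Q < u + 1" using b by (simp_all add: mult_less_cancel_left_pos)
  then show False by simp
qed

text \<open>A window of depth \<open>e\<close> contains a point \<open>q/b\<^sup>e\<close> with \<open>-1 \<le> q \<le> b\<^sup>e\<close>, and each such point
  lies in at most three windows \<open>3\<lambda>\<close>.\<close>
lemma card_badic_depth_eq_le:
  assumes b: "b \<ge> 2" and e: "1 \<le> e" "e \<le> j"
  shows "card {k \<in> {0..<b^j}. badic_depth b j k = e} \<le> 9 * b^e"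
proof -
  define d where "d = int b ^ (j - e)"
  have d1: "d \<ge> 1" using b by (simp add: d_def)
  have bjd: "int b ^ j = int b ^ e * d" unfolding d_def using e by (simp add: power_add[symmetric])
  let ?D = "{-1..int (b^e)} \<times> {0..2::int}"
  let ?f = "\<lambda>(q, t). nat (q * d + t - 1)"
  have "{k \<in> {0..<b^j}. badic_depth b j k = e} \<subseteq> ?f ` ?D"
  proof
    fix k assume "k \<in> {k \<in> {0..<b^j}. badic_depth b j k = e}"
    then have k: "k < b^j" "badic_depth b j k = e" by auto
    obtain q where q: "int k - 1 \<le> q * d" "q * d < int k + 2"
      using meets_badic_grid_imp_int[OF b e(2)] meets_badic_grid_depth[OF b, of j k] k(2) e
      unfolding d_def by auto
    have "(- 2) * d < q * d" using q d1 by linarith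
    then have "- 1 \<le> q" using d1 mult_less_cancel_right[of "- 2" d q] by linarith
    moreover have "q * d < (int (b^e) + 1) * d"
      using q k(1) bjd d1 by (simp add: algebra_simps) (smt (verit) of_nat_less_iff of_nat_power)
    then have "q \<le> int (b^e)" using d1 by (simp add: mult_less_cancel_right)
    ultimately have "(q, int k + 1 - q * d) \<in> ?D" using q by auto
    moreover have "k = ?f (q, int k + 1 - q * d)" by simp
    ultimately show "k \<in> ?f ` ?D" by blast
  qed
  then have "card {k \<in> {0..<b^j}. badic_depth b j k = e} \<le> card (?f ` ?D)"
    by (intro card_mono) auto
  also have "\<dots> \<le> card ?D" by (rule card_image_le) simp
  also have "\<dots> = (b^e + 2) * 3" by (simp add: card_cartesian_product nat_add_distrib nat_power_eq)
  also have "\<dots> \<le> 9 * b^e" using b by simp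
  finally show ?thesis .
qed

lemma card_mod_eq_ge:
  assumes b: "b \<ge> 2" and j: "j \<ge> 2"
  shows "b^(j-2) \<le> card {k \<in> {0..<b^j}. k mod b^2 = 2}"
proof -
  let ?f = "\<lambda>u. b^2 * u + 2"
  have b4: "b^2 \<ge> 4" using power_mono[of 2 b 2] b by simp
  have bj: "b^j = b^2 * b^(j-2)" using j by (metis le_add_diff_inverse power_add)
  have "?f ` {0..<b^(j-2)} \<subseteq> {k \<in> {0..<b^j}. k mod b^2 = 2}"
  proof
    fix k assume "k \<in> ?f ` {0..<b^(j-2)}"
    then obtain u where u: "u < b^(j-2)" "k = ?f u" by auto
    have "b^2 * u + 2 < b^2 * (u + 1)" using b4 by simp
    also have "\<dots> \<le> b^2 * b^(j-2)" using u by (intro mult_left_mono) auto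
    finally have "k < b^j" using u bj by simp
    moreover have "k mod b^2 = 2 mod b^2"
      using u by (metis mod_mult_self2 add.commute mult.commute)
    then have "k mod b^2 = 2" using b4 by simp
    ultimately show "k \<in> {k \<in> {0..<b^j}. k mod b^2 = 2}" by simp
  qed
  moreover have "inj_on ?f {0..<b^(j-2)}" using b by (intro inj_onI) simp
  ultimately show ?thesis using card_inj_on_le[of ?f "{0..<b^(j-2)}"] by simp
qed

lemma sum_power_badic_depth_le:
  fixes z :: real
  assumes b: "b \<ge> 2" and j: "j \<ge> 1" and z: "z > 0"
  shows "(\<Sum>k\<in>{0..<b^j}. z ^ badic_depth b j k) \<le> 9 * real j * max 1 (real b * z) ^ j"
proof -
  let ?M = "max 1 (real b * z)"
  have "badic_depth b j ` {0..<b^j} \<subseteq> {1..j}"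
    using badic_depth_ge_1[OF b j] badic_depth_le[OF b j] by auto
  then have "(\<Sum>k\<in>{0..<b^j}. z ^ badic_depth b j k)
      = (\<Sum>e\<in>{1..j}. \<Sum>k\<in>{k \<in> {0..<b^j}. badic_depth b j k = e}. z ^ badic_depth b j k)"
    by (intro sum.group[symmetric]) auto
  also have "\<dots> = (\<Sum>e\<in>{1..j}. real (card {k \<in> {0..<b^j}. badic_depth b j k = e}) * z ^ e)"
    by simp
  also have "\<dots> \<le> (\<Sum>e\<in>{1..j}. 9 * ?M ^ j)"
  proof (intro sum_mono)
    fix e assume e: "e \<in> {1..j}"
    have "real (card {k \<in> {0..<b^j}. badic_depth b j k = e}) * z ^ e \<le> real (9 * b^e) * z ^ e"
      using of_nat_mono[OF card_badic_depth_eq_le[OF b, of e j]] e z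
      by (intro mult_right_mono) (auto simp del: of_nat_mult of_nat_power)
    also have "\<dots> = 9 * (real b * z) ^ e" by (simp add: power_mult_distrib)
    also have "\<dots> \<le> 9 * ?M ^ e" using z by (intro mult_left_mono power_mono) auto
    also have "\<dots> \<le> 9 * ?M ^ j" using e by (intro mult_left_mono power_increasing) auto
    finally show "real (card {k \<in> {0..<b^j}. badic_depth b j k = e}) * z ^ e \<le> 9 * ?M ^ j" .
  qed
  finally show ?thesis by simp
qed

lemma sum_power_badic_depth_ge_first:
  fixes z :: real
  assumes "b \<ge> 2" "j \<ge> 1" "z > 0"
  shows "z \<le> (\<Sum>k\<in>{0..<b^j}. z ^ badic_depth b j k)"
  using member_le_sum[of 0 "{0..<b^j}" "\<lambda>k. z ^ badic_depth b j k"] assms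
  by (simp add: badic_depth_0)

lemma sum_power_badic_depth_ge_deep:
  fixes z :: real
  assumes b: "b \<ge> 2" and j: "j \<ge> 2" and z: "z > 0"
  shows "min 1 (1 / z) / real b ^ 2 * (real b * z) ^ j \<le> (\<Sum>k\<in>{0..<b^j}. z ^ badic_depth b j k)"
proof -
  let ?T = "{k \<in> {0..<b^j}. k mod b^2 = 2}"
  let ?X = "min 1 (1 / z) * z ^ j"
  have j1: "j \<ge> 1" using j by simp
  have X: "0 \<le> ?X" using z by simp
  have "?X \<le> z ^ badic_depth b j k" if "k \<in> ?T" for k
  proof -
    have "j - 1 \<le> badic_depth b j k" "badic_depth b j k \<le> j"
      using badic_depth_ge_if_mod[OF b j] badic_depth_le[OF b j1] that by auto
    then consider "badic_depth b j k = j" | "badic_depth b j k = j - 1" by linarith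
    then show ?thesis
    proof cases
      case 1
      show ?thesis unfolding 1 using z by (intro mult_left_le_one_le) auto
    next
      case 2
      have "z ^ j = z * z ^ (j - 1)" using j1 by (simp add: power_eq_if)
      then have "z ^ (j - 1) = 1 / z * z ^ j" using z by simp
      then show ?thesis
        unfolding 2 using z mult_right_mono[OF min.cobounded2[of 1 "1 / z"], of "z ^ j"] by simp
    qed
  qed
  then have "real (card ?T) * ?X \<le> (\<Sum>k\<in>?T. z ^ badic_depth b j k)"
    using sum_mono[of ?T "\<lambda>_. ?X"] by simp
  also have "\<dots> \<le> (\<Sum>k\<in>{0..<b^j}. z ^ badic_depth b j k)"
    using z by (intro sum_mono2) auto
  finally have "real (b^(j-2)) * ?X \<le> (\<Sum>k\<in>{0..<b^j}. z ^ badic_depth b j k)"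
    using mult_right_mono[OF of_nat_mono[OF card_mod_eq_ge[OF b j]] X] by linarith
  moreover have "real b ^ j = real b ^ 2 * real b ^ (j - 2)"
    using j by (metis le_add_diff_inverse power_add)
  then have "(real b * z) ^ j / real b ^ 2 = real (b^(j-2)) * z ^ j"
    using b by (simp add: power_mult_distrib)
  then have "min 1 (1 / z) / real b ^ 2 * (real b * z) ^ j = real (b^(j-2)) * ?X"
    by (metis times_divide_eq_left times_divide_eq_right mult.left_commute)
  ultimately show ?thesis by simp
qed

section \<open>The scaling function\<close>

lemma ln_ratio_bounds:
  fixes \<beta> c C s t :: real
  assumes \<beta>: "\<beta> > 1" and c: "c > 0" and C: "C > 0" and j: "1 \<le> j"
    and lower: "c * (\<beta> powr - t) ^ j \<le> s" and upper: "s \<le> C * j * (\<beta> powr - t) ^ j"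
  shows "ln (s) / ln (1 / \<beta> ^ j) \<le> t - ln c / (real j * ln \<beta>)"
    and "t - (ln C + ln (real j)) / (real j * ln \<beta>) \<le> ln (s) / ln (1 / \<beta> ^ j)"
proof -
  let ?L = "ln \<beta>"
  have L: "?L > 0" using \<beta> by simp
  then have D: "real j * ?L > 0" using j by simp
  have den: "ln (1 / \<beta> ^ j) = - (real j * ?L)"
    using \<beta> by (simp add: ln_div ln_realpow)
  have q: "(\<beta> powr - t) ^ j > 0" and ln_q: "ln ((\<beta> powr - t) ^ j) = - t * (real j * ?L)"
    using \<beta> by (simp_all add: ln_realpow)
  have s: "s > 0" using lower c q by (smt (verit) mult_pos_pos)
  have "ln (c * (\<beta> powr - t) ^ j) \<le> ln (s)" using lower c q s by simp
  then have lo: "ln c - t * (real j * ?L) \<le> ln (s)" using \<beta> c q by (simp add: ln_mult ln_q)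
  have "ln (s) \<le> ln (C * j * (\<beta> powr - t) ^ j)" using j upper C q s by simp
  then have hi: "ln (s) \<le> ln C + ln (real j) - t * (real j * ?L)"
    using \<beta> C q j by (simp add: ln_mult ln_q)
  have "(ln c - t * (real j * ?L)) / (real j * ?L) \<le> ln (s) / (real j * ?L)"
    using lo D by (intro divide_right_mono) auto
  then show "ln (s) / ln (1 / \<beta> ^ j) \<le> t - ln c / (real j * ?L)"
    unfolding den using L j by (simp add: diff_divide_distrib)
  have "ln (s) / (real j * ?L) \<le> (ln C + ln (real j) - t * (real j * ?L)) / (real j * ?L)"
    using hi D by (intro divide_right_mono) auto
  then show "t - (ln C + ln (real j)) / (real j * ?L) \<le> ln (s) / ln (1 / \<beta> ^ j)"
    unfolding den using L j by (simp add: diff_divide_distrib)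
qed

lemma ln_ratio_tendsto:
  fixes S :: "nat \<Rightarrow> real" and \<beta> c C t :: real
  assumes \<beta>: "\<beta> > 1" and c: "c > 0" and C: "C > 0"
    and bounds: "\<forall>\<^sub>F j in sequentially. c * (\<beta> powr - t) ^ j \<le> S j \<and> S j \<le> C * j * (\<beta> powr - t) ^ j"
  shows "((\<lambda>j. ln (S j) / ln (1 / \<beta> ^ j)) \<longlongrightarrow> t) sequentially"
proof (rule tendsto_sandwich)
  show "\<forall>\<^sub>F j in sequentially. ln (S j) / ln (1 / \<beta> ^ j) \<le> t - ln c / (real j * ln \<beta>)"
    "\<forall>\<^sub>F j in sequentially. t - (ln C + ln (real j)) / (real j * ln \<beta>) \<le> ln (S j) / ln (1 / \<beta> ^ j)"
    using eventually_conj[OF bounds eventually_ge_at_top[of 1]] ln_ratio_bounds[OF \<beta> c C]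
    by (auto elim: eventually_mono)
  have "((\<lambda>j. t - (1 / ln \<beta>) * (ln c / real j)) \<longlongrightarrow> t - (1 / ln \<beta>) * 0) sequentially"
    by (intro tendsto_intros)
  then show "((\<lambda>j. t - ln c / (real j * ln \<beta>)) \<longlongrightarrow> t) sequentially"
    by (simp add: mult.commute)
  have "((\<lambda>j. t - (1 / ln \<beta>) * ((ln C + ln (real j)) / real j)) \<longlongrightarrow> t - (1 / ln \<beta>) * 0) sequentially"
    by (intro tendsto_intros) real_asymp
  then show "((\<lambda>j. t - (ln C + ln (real j)) / (real j * ln \<beta>)) \<longlongrightarrow> t) sequentially"
    by (simp add: mult.commute)
qed

lemma powr_le_powr_of_bounds:
  fixes c C X v r :: real
  assumes "0 < c" "c \<le> C" "0 < X" "c * X \<le> v" "v \<le> C * X"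
  shows "min (c powr r) (C powr r) * X powr r \<le> v powr r"
    and "v powr r \<le> max (c powr r) (C powr r) * X powr r"
proof -
  have v: "0 < v" using assms by (smt (verit) mult_pos_pos)
  consider "0 \<le> r" | "r \<le> 0" by linarith
  then have "min (c powr r) (C powr r) * X powr r \<le> v powr r \<and> v powr r \<le> max (c powr r) (C powr r) * X powr r"
  proof cases
    case 1
    then have "(c * X) powr r \<le> v powr r" "v powr r \<le> (C * X) powr r"
      using assms v by (auto intro!: powr_mono2)
    then show ?thesis using assms
      by (simp add: powr_mult) (meson min.cobounded1 max.cobounded2 mult_right_mono powr_ge_zero order_trans)
  next
    case 2
    then have "(C * X) powr r \<le> v powr r" "v powr r \<le> (c * X) powr r"
      using assms v by (auto intro!: powr_mono2')
    then show ?thesis using assms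
      by (simp add: powr_mult) (meson min.cobounded2 max.cobounded1 mult_right_mono powr_ge_zero order_trans)
  qed
  then show "min (c powr r) (C powr r) * X powr r \<le> v powr r" "v powr r \<le> max (c powr r) (C powr r) * X powr r"
    by simp_all
qed

lemma max_1_times_powr_neg:
  assumes "b \<ge> 2"
  shows "max 1 (real b * real b powr - s) / real b = real b powr - min 1 s"
proof -
  have bs: "real b * real b powr - s = real b powr (1 - s)"
    using assms by (simp add: powr_diff powr_minus field_simps)
  show ?thesis
  proof (cases "1 \<le> s")
    case True
    then have "real b * real b powr - s \<le> 1" using assms powr_mono[of "1 - s" 0 "real b"] bs by simp
    then show ?thesis using True by (simp add: powr_minus divide_inverse)
  next
    case False
    then have "1 \<le> real b * real b powr - s" using assms powr_mono[of 0 "1 - s" "real b"] bs by simp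
    then show ?thesis using False assms by simp
  qed
qed

locale comparable_oscillations =
  fixes b n :: nat and fs :: "nat \<Rightarrow> real \<Rightarrow> real" and \<alpha> c C :: "nat \<Rightarrow> real"
  assumes b: "b \<ge> 2"
    and constants: "\<And>i. i \<in> {1..n} \<Longrightarrow> 0 < c i \<and> c i \<le> C i"
    and osc_lower: "\<And>i j k. i \<in> {1..n} \<Longrightarrow> 1 \<le> j \<Longrightarrow>
      c i * (real b powr - \<alpha> i) ^ badic_depth b j k \<le> osc b (fs i) j (int k)"
    and osc_upper: "\<And>i j k. i \<in> {1..n} \<Longrightarrow> 1 \<le> j \<Longrightarrow>
      osc b (fs i) j (int k) \<le> C i * (real b powr - \<alpha> i) ^ badic_depth b j k"
begin

lemma structure_fun_bounds:
  fixes r :: "nat \<Rightarrow> real"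
  defines "z \<equiv> real b powr - (\<Sum>i\<in>{1..n}. \<alpha> i * r i)"
  obtains A B where "0 < A" "0 < B"
    "\<And>j. 1 \<le> j \<Longrightarrow> A * (\<Sum>k\<in>{0..<b^j}. z ^ badic_depth b j k) / real b ^ j \<le> structure_fun b n fs r j"
    "\<And>j. 1 \<le> j \<Longrightarrow> structure_fun b n fs r j \<le> B * (\<Sum>k\<in>{0..<b^j}. z ^ badic_depth b j k) / real b ^ j"
proof -
  define A where "A = (\<Prod>i\<in>{1..n}. min (c i powr r i) (C i powr r i))"
  define B where "B = (\<Prod>i\<in>{1..n}. max (c i powr r i) (C i powr r i))"
  have "0 < c i powr r i" "0 < C i powr r i" if "i \<in> {1..n}" for i
    using constants[OF that] by auto
  then have "0 < A" "0 < B" unfolding A_def B_def by (auto intro!: prod_pos simp: less_max_iff_disj)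
  have factor_powr: "((real b powr - \<alpha> i) ^ m) powr r i = real b powr (- (\<alpha> i * r i) * m)" for i m
    using b by (simp add: powr_realpow[symmetric] powr_powr mult_ac)
  have z_power: "z ^ m = (\<Prod>i\<in>{1..n}. ((real b powr - \<alpha> i) ^ m) powr r i)" for m
    using b by (simp add: z_def factor_powr powr_realpow[symmetric] powr_powr powr_sum[symmetric]
        sum_distrib_left sum_negf mult_ac)
  have prod_bounds: "A * z ^ badic_depth b j k \<le> (\<Prod>i\<in>{1..n}. osc b (fs i) j (int k) powr r i)"
    "(\<Prod>i\<in>{1..n}. osc b (fs i) j (int k) powr r i) \<le> B * z ^ badic_depth b j k"
    if "1 \<le> j" for j k
  proof -
    let ?X = "\<lambda>i. (real b powr - \<alpha> i) ^ badic_depth b j k"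
    have "min (c i powr r i) (C i powr r i) * ?X i powr r i \<le> osc b (fs i) j (int k) powr r i"
      "osc b (fs i) j (int k) powr r i \<le> max (c i powr r i) (C i powr r i) * ?X i powr r i"
      if "i \<in> {1..n}" for i
      using powr_le_powr_of_bounds[of "c i" "C i" "?X i"] constants[OF that]
        osc_lower[OF that \<open>1 \<le> j\<close>] osc_upper[OF that \<open>1 \<le> j\<close>] b by auto
    then show "A * z ^ badic_depth b j k \<le> (\<Prod>i\<in>{1..n}. osc b (fs i) j (int k) powr r i)"
      "(\<Prod>i\<in>{1..n}. osc b (fs i) j (int k) powr r i) \<le> B * z ^ badic_depth b j k"
      unfolding A_def B_def z_power prod.distrib[symmetric] by (auto intro!: prod_mono)
  qed
  show thesis
  proof (rule that[OF \<open>0 < A\<close> \<open>0 < B\<close>])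
    fix j :: nat assume j: "1 \<le> j"
    have "A * (\<Sum>k\<in>{0..<b^j}. z ^ badic_depth b j k)
        \<le> (\<Sum>k\<in>{0..<b^j}. \<Prod>i\<in>{1..n}. osc b (fs i) j (int k) powr r i)"
      using prod_bounds(1)[OF j] by (simp add: sum_distrib_left sum_mono)
    moreover have "(\<Sum>k\<in>{0..<b^j}. \<Prod>i\<in>{1..n}. osc b (fs i) j (int k) powr r i)
        \<le> B * (\<Sum>k\<in>{0..<b^j}. z ^ badic_depth b j k)"
      using prod_bounds(2)[OF j] by (simp add: sum_distrib_left sum_mono)
    ultimately show "A * (\<Sum>k\<in>{0..<b^j}. z ^ badic_depth b j k) / real b ^ j \<le> structure_fun b n fs r j"
      "structure_fun b n fs r j \<le> B * (\<Sum>k\<in>{0..<b^j}. z ^ badic_depth b j k) / real b ^ j"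
      unfolding structure_fun_def using b by (simp_all add: divide_right_mono)
  qed
qed

lemma structure_fun_le_rate:
  fixes r :: "nat \<Rightarrow> real"
  defines "q \<equiv> real b powr - min 1 (\<Sum>i\<in>{1..n}. \<alpha> i * r i)"
  obtains B where "0 < B" "\<And>j. 1 \<le> j \<Longrightarrow> structure_fun b n fs r j \<le> B * j * q ^ j"
proof -
  define z where "z = real b powr - (\<Sum>i\<in>{1..n}. \<alpha> i * r i)"
  have z: "z > 0" using b by (simp add: z_def)
  obtain B where B: "0 < B"
    and S: "\<And>j. 1 \<le> j \<Longrightarrow> structure_fun b n fs r j \<le> B * (\<Sum>k\<in>{0..<b^j}. z ^ badic_depth b j k) / real b ^ j"
    using structure_fun_bounds unfolding z_def by blast
  have "structure_fun b n fs r j \<le> 9 * B * j * q ^ j" if j: "1 \<le> j" for j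
  proof -
    have "B * (\<Sum>k\<in>{0..<b^j}. z ^ badic_depth b j k) / real b ^ j
        \<le> B * (9 * real j * max 1 (real b * z) ^ j) / real b ^ j"
      using sum_power_badic_depth_le[OF b j z] B b by (intro divide_right_mono mult_left_mono) auto
    also have "\<dots> = 9 * B * j * (max 1 (real b * z) / real b) ^ j"
      by (simp add: power_divide)
    finally show ?thesis using S[OF j] max_1_times_powr_neg[OF b] by (simp add: z_def q_def)
  qed
  then show thesis using that[of "9 * B"] B by simp
qed

lemma structure_fun_ge_rate:
  fixes r :: "nat \<Rightarrow> real"
  defines "q \<equiv> real b powr - min 1 (\<Sum>i\<in>{1..n}. \<alpha> i * r i)"
  obtains a where "0 < a" "\<And>j. 2 \<le> j \<Longrightarrow> a * q ^ j \<le> structure_fun b n fs r j"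
proof -
  define s where "s = (\<Sum>i\<in>{1..n}. \<alpha> i * r i)"
  define z where "z = real b powr - s"
  have z: "z > 0" using b by (simp add: z_def)
  obtain A where A: "0 < A"
    and S: "\<And>j. 1 \<le> j \<Longrightarrow> A * (\<Sum>k\<in>{0..<b^j}. z ^ badic_depth b j k) / real b ^ j \<le> structure_fun b n fs r j"
    using structure_fun_bounds unfolding z_def s_def by blast
  show thesis
  proof (cases "1 \<le> s")
    case True
    have "A * z * q ^ j \<le> structure_fun b n fs r j" if "2 \<le> j" for j
    proof -
      have "A * z * q ^ j = A * z / real b ^ j"
        using True b by (simp add: q_def s_def powr_minus power_inverse divide_inverse)
      also have "\<dots> \<le> A * (\<Sum>k\<in>{0..<b^j}. z ^ badic_depth b j k) / real b ^ j"
        using sum_power_badic_depth_ge_first[OF b _ z, of j] that A b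
        by (intro divide_right_mono mult_left_mono) auto
      finally show ?thesis using S[of j] that by simp
    qed
    then show thesis using that[of "A * z"] A z by simp
  next
    case False
    text \<open>Here the sum is dominated by the many windows of depth at least \<open>j - 1\<close>.\<close>
    let ?c = "A * (min 1 (1 / z) / real b ^ 2)"
    have "?c * q ^ j \<le> structure_fun b n fs r j" if "2 \<le> j" for j
    proof -
      have "?c * q ^ j = A * (min 1 (1 / z) / real b ^ 2 * (real b * z) ^ j) / real b ^ j"
        using False b by (simp add: q_def s_def z_def power_mult_distrib)
      also have "\<dots> \<le> A * (\<Sum>k\<in>{0..<b^j}. z ^ badic_depth b j k) / real b ^ j"
        using sum_power_badic_depth_ge_deep[OF b that z] A b
        by (intro divide_right_mono mult_left_mono) auto
      finally show ?thesis using S[of j] that by simp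
    qed
    then show thesis using that[of ?c] A z b by simp
  qed
qed

lemma scaling_fun_eq: "scaling_fun b n fs r = ereal (min 1 (\<Sum>i\<in>{1..n}. \<alpha> i * r i))"
proof -
  let ?t = "min 1 (\<Sum>i\<in>{1..n}. \<alpha> i * r i)"
  obtain B where B: "0 < B" "\<And>j. 1 \<le> j \<Longrightarrow> structure_fun b n fs r j \<le> B * j * (real b powr - ?t) ^ j"
    using structure_fun_le_rate[of r] by blast
  obtain a where a: "0 < a" "\<And>j. 2 \<le> j \<Longrightarrow> a * (real b powr - ?t) ^ j \<le> structure_fun b n fs r j"
    using structure_fun_ge_rate[of r] by blast
  have "\<forall>\<^sub>F j in sequentially. a * (real b powr - ?t) ^ j \<le> structure_fun b n fs r j
      \<and> structure_fun b n fs r j \<le> B * j * (real b powr - ?t) ^ j"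
    using eventually_ge_at_top[of 2] by eventually_elim (use B a in auto)
  then have "((\<lambda>j. ln (structure_fun b n fs r j) / ln (1 / real b ^ j)) \<longlongrightarrow> ?t) sequentially"
    using b B a by (intro ln_ratio_tendsto) auto
  then show ?thesis
    unfolding scaling_fun_def by (intro lim_imp_Liminf tendsto_ereal) auto
qed

end

section \<open>The Legendre spectrum\<close>

lemma INF_ereal_eq_minf_if_unbounded:
  fixes V :: "'a \<Rightarrow> real"
  assumes unbounded: "\<And>M. \<exists>r. V r < M"
  shows "(INF r. ereal (V r)) = -\<infinity>"
proof (rule ccontr)
  assume "(INF r. ereal (V r)) \<noteq> -\<infinity>"
  then obtain B where B: "B > -\<infinity>" "\<And>r. B \<le> ereal (V r)" unfolding INF_eq_minf by blast
  then obtain M where M: "ereal M \<le> B" by (cases B) auto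
  obtain r where "V r < M" using unbounded by blast
  moreover have "ereal M \<le> ereal (V r)" using M B(2)[of r] by (rule order_trans)
  ultimately show False by simp
qed

lemma INF_one_minus_min_plus_linear:
  fixes h :: real
  shows "(INF s. ereal (1 - min 1 s + h * s)) = (if 0 \<le> h \<and> h \<le> 1 then ereal h else -\<infinity>)"
proof (cases "0 \<le> h \<and> h \<le> 1")
  case True
  have "h \<le> 1 - min 1 s + h * s" for s
  proof (cases "1 \<le> s")
    case True
    then show ?thesis using \<open>0 \<le> h \<and> h \<le> 1\<close> mult_left_mono[of 1 s h] by simp
  next
    case False
    then show ?thesis using \<open>0 \<le> h \<and> h \<le> 1\<close> mult_left_mono[of s 1 "1 - h"] by (simp add: algebra_simps)
  qed
  then have "ereal h \<le> (INF s. ereal (1 - min 1 s + h * s))" by (auto intro: INF_greatest)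
  moreover have "(INF s. ereal (1 - min 1 s + h * s)) \<le> ereal h"
    using INF_lower[of 1 UNIV "\<lambda>s. ereal (1 - min 1 s + h * s)"] by simp
  ultimately show ?thesis using True by simp
next
  case False
  have "\<exists>s. 1 - min 1 s + h * s < M" for M
  proof (cases "h < 0")
    case True
    define s where "s = max 1 ((M - 1) / h)"
    have "h * s \<le> h * ((M - 1) / h)" using True by (intro mult_left_mono_neg) (auto simp: s_def)
    moreover have "min 1 s = 1" by (simp add: s_def)
    ultimately have "1 - min 1 s + h * s \<le> M - 1" using True by simp
    then show ?thesis by (intro exI[of _ s]) simp
  next
    case False
    with \<open>\<not> (0 \<le> h \<and> h \<le> 1)\<close> have h: "h > 1" by simp
    define s where "s = min 0 ((M - 2) / (h - 1))"
    have "(h - 1) * s \<le> (h - 1) * ((M - 2) / (h - 1))" using h by (intro mult_left_mono) (auto simp: s_def)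
    then have "(h - 1) * s \<le> M - 2" using h by simp
    moreover have "1 - min 1 s + h * s = 1 + (h - 1) * s" by (simp add: s_def algebra_simps)
    ultimately have "1 - min 1 s + h * s \<le> M - 1" by linarith
    then show ?thesis by (intro exI[of _ s]) simp
  qed
  then show ?thesis using False by (simp add: INF_ereal_eq_minf_if_unbounded)
qed

lemma sum_mult_if_eq:
  fixes f :: "nat \<Rightarrow> real"
  assumes "finite S" "a \<in> S"
  shows "(\<Sum>l\<in>S. f l * (if l = a then x else 0)) = f a * x"
  using assms by (simp add: if_distrib[of "(*) _"] cong: if_cong)

lemma legendre_INF_proportional:
  fixes \<alpha> H :: "nat \<Rightarrow> real"
  assumes "1 \<le> n" "\<alpha> 1 \<noteq> 0" and H: "\<And>i. i \<in> {1..n} \<Longrightarrow> H i = h * \<alpha> i"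
  shows "(INF r. ereal (1 - min 1 (\<Sum>i\<in>{1..n}. \<alpha> i * r i) + (\<Sum>i\<in>{1..n}. H i * r i)))
    = (if 0 \<le> h \<and> h \<le> 1 then ereal h else -\<infinity>)"
proof -
  let ?s = "\<lambda>r. \<Sum>i\<in>{1..n}. \<alpha> i * r i"
  have "(\<Sum>i\<in>{1..n}. H i * r i) = h * ?s r" for r
    by (simp add: H sum_distrib_left mult.assoc)
  moreover have "range ?s = UNIV"
  proof -
    have "?s (\<lambda>l. if l = 1 then s / \<alpha> 1 else 0) = s" for s
      using assms sum_mult_if_eq[of "{1..n}" 1 \<alpha> "s / \<alpha> 1"] by simp
    then show ?thesis by (metis surj_def)
  qed
  ultimately have "(INF r. ereal (1 - min 1 (?s r) + (\<Sum>i\<in>{1..n}. H i * r i)))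
      = (INF s. ereal (1 - min 1 s + h * s))"
    using INF_image[of "\<lambda>s. ereal (1 - min 1 s + h * s)" ?s UNIV] by (simp add: comp_def)
  then show ?thesis by (simp add: INF_one_minus_min_plus_linear)
qed

lemma legendre_INF_not_proportional:
  fixes \<alpha> H :: "nat \<Rightarrow> real"
  assumes i: "i \<in> {2..n}" and "\<alpha> 1 \<noteq> 0" and not_prop: "H i \<noteq> \<alpha> i / \<alpha> 1 * H 1"
  shows "(INF r. ereal (1 - min 1 (\<Sum>l\<in>{1..n}. \<alpha> l * r l) + (\<Sum>l\<in>{1..n}. H l * r l))) = -\<infinity>"
proof (rule INF_ereal_eq_minf_if_unbounded)
  fix M :: real
  define D where "D = \<alpha> i * H 1 - \<alpha> 1 * H i"
  have "D \<noteq> 0" using not_prop \<open>\<alpha> 1 \<noteq> 0\<close> by (auto simp: D_def field_simps)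
  define \<tau> where "\<tau> = (M - 2) / D"
  text \<open>Moving along a direction orthogonal to \<open>\<alpha>\<close> changes only the linear term.\<close>
  define r where "r l = (if l = 1 then \<tau> * \<alpha> i else 0) + (if l = i then - \<tau> * \<alpha> 1 else 0)" for l
  have sum_r: "(\<Sum>l\<in>{1..n}. f l * r l) = \<tau> * (f 1 * \<alpha> i - f i * \<alpha> 1)" for f :: "nat \<Rightarrow> real"
  proof -
    have "(\<Sum>l\<in>{1..n}. f l * r l) = (\<Sum>l\<in>{1..n}. f l * (if l = 1 then \<tau> * \<alpha> i else 0))
        + (\<Sum>l\<in>{1..n}. f l * (if l = i then - \<tau> * \<alpha> 1 else 0))"
      by (simp add: r_def distrib_left sum.distrib)
    also have "\<dots> = f 1 * (\<tau> * \<alpha> i) + f i * (- \<tau> * \<alpha> 1)"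
      using i by (simp add: sum_mult_if_eq)
    finally show ?thesis by (simp add: algebra_simps)
  qed
  have "1 - min 1 (\<Sum>l\<in>{1..n}. \<alpha> l * r l) + (\<Sum>l\<in>{1..n}. H l * r l) = 1 + \<tau> * D"
    unfolding sum_r by (simp add: D_def algebra_simps)
  also have "\<dots> = M - 1" using \<open>D \<noteq> 0\<close> by (simp add: \<tau>_def)
  finally show "\<exists>r. 1 - min 1 (\<Sum>l\<in>{1..n}. \<alpha> l * r l) + (\<Sum>l\<in>{1..n}. H l * r l) < M"
    by (intro exI[of _ r]) simp
qed

lemma legendre_spectrum_of_scaling:
  fixes \<alpha> H :: "nat \<Rightarrow> real"
  assumes n: "n \<ge> 2" and \<alpha>: "\<forall>i\<in>{1..n}. \<alpha> i > 0"
    and scaling: "\<And>r. scaling_fun b n fs r = ereal (min 1 (\<Sum>i\<in>{1..n}. \<alpha> i * r i))"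
  shows "legendre_spectrum b n fs H =
    (if (\<forall>i\<in>{1..n}. 0 \<le> H i \<and> H i \<le> \<alpha> i) \<and> (\<forall>i\<in>{2..n}. H i = \<alpha> i / \<alpha> 1 * H 1)
     then ereal (H 1 / \<alpha> 1) else -\<infinity>)"
proof -
  have \<alpha>1: "\<alpha> 1 > 0" using \<alpha> n by simp
  have spectrum: "legendre_spectrum b n fs H
      = (INF r. ereal (1 - min 1 (\<Sum>i\<in>{1..n}. \<alpha> i * r i) + (\<Sum>i\<in>{1..n}. H i * r i)))"
    unfolding legendre_spectrum_def scaling by (simp add: one_ereal_def del: ereal_min)
  show ?thesis
  proof (cases "\<forall>i\<in>{2..n}. H i = \<alpha> i / \<alpha> 1 * H 1")
    case True
    define h where "h = H 1 / \<alpha> 1"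
    have H: "H i = h * \<alpha> i" if "i \<in> {1..n}" for i
      using True that \<alpha>1 by (cases "i = 1") (auto simp: h_def)
    have box: "(\<forall>i\<in>{1..n}. 0 \<le> H i \<and> H i \<le> \<alpha> i) \<longleftrightarrow> 0 \<le> h \<and> h \<le> 1"
    proof
      assume "\<forall>i\<in>{1..n}. 0 \<le> H i \<and> H i \<le> \<alpha> i"
      then have "0 \<le> H 1" "H 1 \<le> \<alpha> 1" using n by auto
      then show "0 \<le> h \<and> h \<le> 1" using \<alpha>1 by (simp add: h_def)
    next
      assume "0 \<le> h \<and> h \<le> 1"
      then show "\<forall>i\<in>{1..n}. 0 \<le> H i \<and> H i \<le> \<alpha> i"
        using \<alpha> by (auto simp: H intro: mult_left_le_one_le)
    qed
    have spectrum_h: "legendre_spectrum b n fs H = (if 0 \<le> h \<and> h \<le> 1 then ereal h else -\<infinity>)"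
      unfolding spectrum using n \<alpha>1 H by (intro legendre_INF_proportional) auto
    have "((\<forall>i\<in>{1..n}. 0 \<le> H i \<and> H i \<le> \<alpha> i) \<and> (\<forall>i\<in>{2..n}. H i = \<alpha> i / \<alpha> 1 * H 1))
        \<longleftrightarrow> 0 \<le> h \<and> h \<le> 1"
      using box True by blast
    then show ?thesis unfolding spectrum_h h_def by simp
  next
    case False
    then obtain i where "i \<in> {2..n}" "H i \<noteq> \<alpha> i / \<alpha> 1 * H 1" by blast
    then have "legendre_spectrum b n fs H = -\<infinity>"
      unfolding spectrum using \<alpha>1 by (intro legendre_INF_not_proportional) auto
    then show ?thesis using False by simp
  qed
qed

lemma b_adic_rational_0: "b_adic_rational b 0"
  unfolding b_adic_rational_def by (intro exI[of _ 0]) simp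

lemma comparable_oscillations_shifted_levy:
  assumes "b \<ge> 2" "\<forall>i\<in>{1..n}. \<alpha> i > 0" "\<And>i. i \<in> {1..n} \<Longrightarrow> b_adic_rational b (y i)"
  shows "\<exists>c C. comparable_oscillations b n (\<lambda>i. shifted_levy b (\<alpha> i) (- y i)) \<alpha> c C"
proof -
  have "\<exists>c C. 0 < c \<and> c \<le> C \<and> (\<forall>j k. 1 \<le> j \<longrightarrow>
      c * (real b powr - \<alpha> i) ^ badic_depth b j k \<le> osc b (shifted_levy b (\<alpha> i) (- y i)) j (int k) \<and>
      osc b (shifted_levy b (\<alpha> i) (- y i)) j (int k) \<le> C * (real b powr - \<alpha> i) ^ badic_depth b j k)"
    if "i \<in> {1..n}" for i
    using assms that by (elim osc_shifted_levy_comparable[of b "\<alpha> i" "y i"]) (auto intro!: exI)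
  then obtain c C where "\<forall>i\<in>{1..n}. 0 < c i \<and> c i \<le> C i \<and> (\<forall>j k. 1 \<le> j \<longrightarrow>
      c i * (real b powr - \<alpha> i) ^ badic_depth b j k \<le> osc b (shifted_levy b (\<alpha> i) (- y i)) j (int k) \<and>
      osc b (shifted_levy b (\<alpha> i) (- y i)) j (int k) \<le> C i * (real b powr - \<alpha> i) ^ badic_depth b j k)"
    by metis
  then have "comparable_oscillations b n (\<lambda>i. shifted_levy b (\<alpha> i) (- y i)) \<alpha> c C"
    using assms(1) by unfold_locales auto
  then show ?thesis by blast
qed

theorem mainTheorem2:
  fixes b n :: nat and \<alpha> y H :: "nat \<Rightarrow> real"
  assumes "b \<ge> 2" and "n \<ge> 2"
    and "\<forall>i\<in>{1..n}. \<alpha> i > 0"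
    and "y 1 = 0"
    and "\<forall>i\<in>{2..n}. 0 \<le> y i \<and> y i < 1 \<and> b_adic_rational b (y i)"
  shows "legendre_spectrum b n (\<lambda>i. shifted_levy b (\<alpha> i) (- y i)) H =
    (if (\<forall>i\<in>{1..n}. 0 \<le> H i \<and> H i \<le> \<alpha> i) \<and> (\<forall>i\<in>{2..n}. H i = \<alpha> i / \<alpha> 1 * H 1)
     then ereal (H 1 / \<alpha> 1) else -\<infinity>)"
proof -
  have "b_adic_rational b (y i)" if "i \<in> {1..n}" for i
    using assms(4,5) that b_adic_rational_0 by (cases "i = 1") auto
  then obtain c C where "comparable_oscillations b n (\<lambda>i. shifted_levy b (\<alpha> i) (- y i)) \<alpha> c C"
    using comparable_oscillations_shifted_levy[OF assms(1,3)] by blast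
  then interpret comparable_oscillations b n "\<lambda>i. shifted_levy b (\<alpha> i) (- y i)" \<alpha> c C .
  show ?thesis
    by (rule legendre_spectrum_of_scaling[OF assms(2,3) scaling_fun_eq])
qed

end
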